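(* Assume that the spectra $\Lambda_N[T]$, $\Lambda_D[T]$, $\Lambda_{M_1}[T]$, $\Lambda_{M_2}[T]$, $\Lambda_P[2T]$, $\Lambda_A[2T]$, $\Lambda_N[2T]$, $\Lambda_D[2T]$, $\Lambda_P[4T]$ are all nonempty, that each has a first (smallest) eigenvalue, that this first eigenvalue is simple, and that its eigenfunction has constant sign. Denote these first eigenvalues by $\lambda_0^N[T]$, $\lambda_0^D[T]$, $\lambda_0^{M_1}[T]$, $\lambda_0^{M_2}[T]$, $\lambda_0^P[2T]$, $\lambda_0^A[2T]$, $\lambda_0^N[2T]$, $\lambda_0^D[2T]$, $\lambda_0^P[4T]$. Then, for any $a_0,\dots,a_{2n-1}\in L^1(I)$: 1. $\lambda_0^N[T]=\lambda_0^P[2T]<\lambda_0^D[T]$; 2. $\lambda_0^N[T]=\lambda_0^N[2T]<\lambda_0^{M_1}[T]$; 3. $\lambda_0^N[T]=\lambda_0^P[4T]$; 4. $\lambda_0^{M_2}[T]=\lambda_0^D[2T]<\lambda_0^D[T]$; 5. $\lambda_0^N[T]<\lambda_0^{M_2}[T]$; 6. $\lambda_0^A[2T]=\min\{\lambda_0^{M_1}[T],\lambda_0^{M_2}[T]\}$.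
   Context: Fix $n\ge 1$, $T>0$, $I=[0,T]$, $J=[0,2T]$. $W^{2n,1}(K)$: $u\in C^{2n-1}(K)$ with $u^{(2n-1)}$ absolutely continuous. Let $a_0,\dots,a_{2n-1}$ be integrable on $I$, $Lu=u^{(2n)}+\sum_{k=0}^{2n-1}a_ku^{(k)}$ on $I$. $\widetilde L u=u^{(2n)}+\sum_{k=0}^{n-1}(\hat a_{2k+1}u^{(2k+1)}+\tilde a_{2k}u^{(2k)})$ on $J$, where $\tilde a_{2k}=a_{2k}$, $\hat a_{2k+1}=a_{2k+1}$ on $I$, and $\tilde a_{2k}(t)=a_{2k}(2T-t)$, $\hat a_{2k+1}(t)=-a_{2k+1}(2T-t)$ for $t\in(T,2T]$; $\widetilde{\widetilde L}$ on $[0,4T]$ is obtained by the same construction from $\widetilde L$ (reflection about $2T$). For an operator $M$, $M[\lambda]u=Mu+\lambda u$; $\lambda$ is an eigenvalue of $M$ on $X$ if $M[\lambda]u=0$ a.e. has a nontrivial solution $u\in X$ (an eigenfunction). Spaces ($k=0,\dots,n-1$ unless stated): $X_{N,T}$: $u^{(2k+1)}(0)=u^{(2k+1)}(T)=0$; $X_{D,T}$: $u^{(2k)}(0)=u^{(2k)}(T)=0$; $X_{M_1,T}$: $u^{(2k+1)}(0)=u^{(2k)}(T)=0$; $X_{M_2,T}$: $u^{(2k)}(0)=u^{(2k+1)}(T)=0$ (in $W^{2n,1}(I)$); $X_{P,2T}$: $u^{(k)}(0)=u^{(k)}(2T)$, $k=0,\dots,2n-1$; $X_{A,2T}$: $u^{(k)}(0)=-u^{(k)}(2T)$,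 $k=0,\dots,2n-1$; $X_{N,2T}$: $u^{(2k+1)}(0)=u^{(2k+1)}(2T)=0$; $X_{D,2T}$: $u^{(2k)}(0)=u^{(2k)}(2T)=0$ (in $W^{2n,1}(J)$); $X_{P,4T}$: $u^{(k)}(0)=u^{(k)}(4T)$, $k=0,\dots,2n-1$. $\Lambda_N[T],\Lambda_D[T],\Lambda_{M_1}[T],\Lambda_{M_2}[T]$ are the eigenvalue sets of $L$ on $X_{N,T},X_{D,T},X_{M_1,T},X_{M_2,T}$; $\Lambda_P[2T],\Lambda_A[2T],\Lambda_N[2T],\Lambda_D[2T]$ those of $\widetilde L$ on $X_{P,2T},X_{A,2T},X_{N,2T},X_{D,2T}$; $\Lambda_P[4T]$ that of $\widetilde{\widetilde L}$ on $X_{P,4T}$. *)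

theory Defs
  imports "HOL-Analysis.Analysis"
begin

definition abs_cont_on :: "real \<Rightarrow> real \<Rightarrow> (real \<Rightarrow> real) \<Rightarrow> bool" where
  "abs_cont_on a b f \<longleftrightarrow>
     (\<forall>e>0. \<exists>d>0. \<forall>(N::nat) (l::nat \<Rightarrow> real) (r::nat \<Rightarrow> real).
        (\<forall>i<N. a \<le> l i \<and> l i \<le> r i \<and> r i \<le> b) \<and>
        (\<forall>i<N. \<forall>j<N. i \<noteq> j \<longrightarrow> r i \<le> l j \<or> r j \<le> l i) \<and>
        (\<Sum>i<N. r i - l i) < d
        \<longrightarrow> (\<Sum>i<N. \<bar>f (r i) - f (l i)\<bar>) < e)"

text \<open>D is the family of derivatives u, u', ..., u^(m-1) of a function in W^{m,1}([a,b]):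
  D 0 = u, D (k+1) is the derivative of D k on [a,b] for k < m-1, and D (m-1) is absolutely
  continuous on [a,b].  D m is meant to be the a.e. derivative of D (m-1).\<close>
definition W_derivs :: "nat \<Rightarrow> real \<Rightarrow> real \<Rightarrow> (real \<Rightarrow> real) \<Rightarrow> (nat \<Rightarrow> real \<Rightarrow> real) \<Rightarrow> bool" where
  "W_derivs m a b u D \<longleftrightarrow>
     (\<forall>t\<in>{a..b}. D 0 t = u t) \<and>
     (\<forall>k. Suc k < m \<longrightarrow> (\<forall>t\<in>{a..b}. (D k has_real_derivative D (Suc k) t) (at t within {a..b}))) \<and>
     abs_cont_on a b (D (m - 1))"

definition eigfun :: "nat \<Rightarrow> (nat \<Rightarrow> real \<Rightarrow> real) \<Rightarrow> real \<Rightarrow> real \<Rightarrow>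
    ((nat \<Rightarrow> real \<Rightarrow> real) \<Rightarrow> bool) \<Rightarrow> real \<Rightarrow> (real \<Rightarrow> real) \<Rightarrow> bool" where
  "eigfun m c a b BC lam u \<longleftrightarrow>
     (\<exists>D. W_derivs m a b u D \<and> BC D \<and>
          (AE t in lebesgue_on {a..b}.
              (D (m - 1) has_real_derivative D m t) (at t within {a..b}) \<and>
              D m t + (\<Sum>k<m. c k t * D k t) + lam * D 0 t = 0)) \<and>
     (\<exists>t\<in>{a..b}. u t \<noteq> 0)"

definition spec :: "nat \<Rightarrow> (nat \<Rightarrow> real \<Rightarrow> real) \<Rightarrow> real \<Rightarrow> real \<Rightarrow>
    ((nat \<Rightarrow> real \<Rightarrow> real) \<Rightarrow> bool) \<Rightarrow> real set" where
  "spec m c a b BC = {lam. \<exists>u. eigfun m c a b BC lam u}"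

definition first_eig :: "nat \<Rightarrow> (nat \<Rightarrow> real \<Rightarrow> real) \<Rightarrow> real \<Rightarrow> real \<Rightarrow>
    ((nat \<Rightarrow> real \<Rightarrow> real) \<Rightarrow> bool) \<Rightarrow> real \<Rightarrow> bool" where
  "first_eig m c a b BC l \<longleftrightarrow>
     l \<in> spec m c a b BC \<and> (\<forall>x\<in>spec m c a b BC. l \<le> x) \<and>
     (\<exists>u. eigfun m c a b BC l u \<and>
          (\<forall>v. eigfun m c a b BC l v \<longrightarrow> (\<exists>s::real. \<forall>t\<in>{a..b}. v t = s * u t))) \<and>
     (\<forall>u. eigfun m c a b BC l u \<longrightarrow>
          (\<forall>t\<in>{a..b}. 0 \<le> u t) \<or> (\<forall>t\<in>{a..b}. u t \<le> 0))"

text \<open>Boundary conditions (n = half the order).\<close>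
definition bcN :: "nat \<Rightarrow> real \<Rightarrow> real \<Rightarrow> (nat \<Rightarrow> real \<Rightarrow> real) \<Rightarrow> bool" where
  "bcN n a b D \<longleftrightarrow> (\<forall>k<n. D (2*k+1) a = 0 \<and> D (2*k+1) b = 0)"
definition bcD :: "nat \<Rightarrow> real \<Rightarrow> real \<Rightarrow> (nat \<Rightarrow> real \<Rightarrow> real) \<Rightarrow> bool" where
  "bcD n a b D \<longleftrightarrow> (\<forall>k<n. D (2*k) a = 0 \<and> D (2*k) b = 0)"
definition bcM1 :: "nat \<Rightarrow> real \<Rightarrow> real \<Rightarrow> (nat \<Rightarrow> real \<Rightarrow> real) \<Rightarrow> bool" where
  "bcM1 n a b D \<longleftrightarrow> (\<forall>k<n. D (2*k+1) a = 0 \<and> D (2*k) b = 0)"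
definition bcM2 :: "nat \<Rightarrow> real \<Rightarrow> real \<Rightarrow> (nat \<Rightarrow> real \<Rightarrow> real) \<Rightarrow> bool" where
  "bcM2 n a b D \<longleftrightarrow> (\<forall>k<n. D (2*k) a = 0 \<and> D (2*k+1) b = 0)"
definition bcP :: "nat \<Rightarrow> real \<Rightarrow> real \<Rightarrow> (nat \<Rightarrow> real \<Rightarrow> real) \<Rightarrow> bool" where
  "bcP n a b D \<longleftrightarrow> (\<forall>k<2*n. D k a = D k b)"
definition bcA :: "nat \<Rightarrow> real \<Rightarrow> real \<Rightarrow> (nat \<Rightarrow> real \<Rightarrow> real) \<Rightarrow> bool" where
  "bcA n a b D \<longleftrightarrow> (\<forall>k<2*n. D k a = - D k b)"

text \<open>Reflection of the coefficients about S: on [0,S] unchanged, for t in (S,2S] the coefficient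
  of u^(k) becomes (-1)^k c_k(2S - t).  This is the construction of L-tilde (S = T) and of
  L-tilde-tilde (S = 2T, applied to the coefficients of L-tilde).\<close>
definition reflect :: "real \<Rightarrow> (nat \<Rightarrow> real \<Rightarrow> real) \<Rightarrow> nat \<Rightarrow> real \<Rightarrow> real" where
  "reflect S c k t = (if t \<le> S then c k t else (-1) ^ k * c k (2 * S - t))"

end

theory Submission
  imports Defs
begin

text \<open>Mirroring a solution about T (t \<mapsto> 2T - t, so that the k-th derivative picks up a sign
  (-1)^k, matching reflect) and gluing it to the original yields its even or odd extension to
  [0,2T]; this solves the reflected equation as soon as the odd, resp. even, derivatives vanish at T.
  Extension thus transports eigenvalues from [0,T] to [0,2T], giving the inequalities \<le>; an odd
  extension changes sign, so it is never a first eigenfunction, giving the strict ones.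
  Conversely, the reflected problems are symmetric about T, so by simplicity the first
  eigenfunction on [0,2T] is z times its mirror image, z * z = 1, and z = 1 since it does not change
  sign. Its restriction to [0,T] satisfies the boundary conditions of a half problem, which gives
  the reverse inequalities. The same argument with 2T in place of T handles [0,4T].\<close>

section \<open>Absolute continuity\<close>

definition nonoverlapping_in :: "real \<Rightarrow> real \<Rightarrow> nat \<Rightarrow> (nat \<Rightarrow> real) \<Rightarrow> (nat \<Rightarrow> real) \<Rightarrow> bool" where
  "nonoverlapping_in a b N l r \<longleftrightarrow>
     (\<forall>i<N. a \<le> l i \<and> l i \<le> r i \<and> r i \<le> b) \<and> (\<forall>i<N. \<forall>j<N. i \<noteq> j \<longrightarrow> r i \<le> l j \<or> r j \<le> l i)"

lemma abs_cont_on_iff: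
  "abs_cont_on a b f \<longleftrightarrow>
     (\<forall>e>0. \<exists>d>0. \<forall>N l r. nonoverlapping_in a b N l r \<and> (\<Sum>i<N. r i - l i) < d
        \<longrightarrow> (\<Sum>i<N. \<bar>f (r i) - f (l i)\<bar>) < e)"
  unfolding abs_cont_on_def nonoverlapping_in_def by (simp only: conj_assoc)

lemma abs_cont_onE:
  assumes "abs_cont_on a b f" "e > 0"
  obtains d where "d > 0"
    "\<And>N l r. nonoverlapping_in a b N l r \<Longrightarrow> (\<Sum>i<N. r i - l i) < d \<Longrightarrow> (\<Sum>i<N. \<bar>f (r i) - f (l i)\<bar>) < e"
proof -
  from assms obtain d where "d > 0" "\<forall>N l r. nonoverlapping_in a b N l r \<and> (\<Sum>i<N. r i - l i) < d
        \<longrightarrow> (\<Sum>i<N. \<bar>f (r i) - f (l i)\<bar>) < e"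
    unfolding abs_cont_on_iff by blast
  then show ?thesis using that by blast
qed

lemma abs_cont_onI:
  assumes "\<And>e. e > 0 \<Longrightarrow> \<exists>d>0. \<forall>N l r. nonoverlapping_in a b N l r \<and> (\<Sum>i<N. r i - l i) < d
        \<longrightarrow> (\<Sum>i<N. \<bar>f (r i) - f (l i)\<bar>) < e"
  shows "abs_cont_on a b f"
  using assms unfolding abs_cont_on_iff by blast

lemma abs_cont_on_subinterval:
  assumes "abs_cont_on a b f" "a \<le> a'" "b' \<le> b"
  shows "abs_cont_on a' b' f"
proof -
  have "nonoverlapping_in a b N l r" if "nonoverlapping_in a' b' N l r" for N l r
    using that assms(2,3) unfolding nonoverlapping_in_def by force
  with assms(1) show ?thesis unfolding abs_cont_on_iff by meson
qed

lemma abs_cont_on_uminus: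
  assumes "abs_cont_on a b f"
  shows "abs_cont_on a b (\<lambda>t. - f t)"
proof -
  have "\<bar>- x - - y\<bar> = \<bar>x - y\<bar>" for x y :: real by linarith
  with assms show ?thesis unfolding abs_cont_on_def by simp
qed

lemma abs_cont_on_reflect:
  assumes "abs_cont_on a b f"
  shows "abs_cont_on (\<sigma> - b) (\<sigma> - a) (\<lambda>t. f (\<sigma> - t))"
proof (rule abs_cont_onI)
  fix e :: real assume "e > 0"
  obtain d where "d > 0" and d:
    "\<And>N l r. nonoverlapping_in a b N l r \<Longrightarrow> (\<Sum>i<N. r i - l i) < d \<Longrightarrow> (\<Sum>i<N. \<bar>f (r i) - f (l i)\<bar>) < e"
    using abs_cont_onE[OF assms \<open>e > 0\<close>] by blast
  have "(\<Sum>i<N. \<bar>f (\<sigma> - r i) - f (\<sigma> - l i)\<bar>) < e"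
    if "nonoverlapping_in (\<sigma> - b) (\<sigma> - a) N l r" "(\<Sum>i<N. r i - l i) < d" for N l r
  proof -
    have "nonoverlapping_in a b N (\<lambda>i. \<sigma> - r i) (\<lambda>i. \<sigma> - l i)"
      using that(1) unfolding nonoverlapping_in_def by force
    with that(2) have "(\<Sum>i<N. \<bar>f (\<sigma> - l i) - f (\<sigma> - r i)\<bar>) < e" by (intro d) simp_all
    then show ?thesis by (simp add: abs_minus_commute)
  qed
  with \<open>d > 0\<close> show "\<exists>d>0. \<forall>N l r. nonoverlapping_in (\<sigma> - b) (\<sigma> - a) N l r \<and> (\<Sum>i<N. r i - l i) < d
        \<longrightarrow> (\<Sum>i<N. \<bar>f (\<sigma> - r i) - f (\<sigma> - l i)\<bar>) < e" by blast
qed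

lemma nonoverlapping_in_min:
  assumes lr: "nonoverlapping_in a b N l r" and "a \<le> q"
  shows "nonoverlapping_in a q N (\<lambda>i. min (l i) q) (\<lambda>i. min (r i) q)"
    and "(\<Sum>i<N. min (r i) q - min (l i) q) \<le> (\<Sum>i<N. r i - l i)"
proof -
  show "nonoverlapping_in a q N (\<lambda>i. min (l i) q) (\<lambda>i. min (r i) q)"
    unfolding nonoverlapping_in_def
  proof (intro conjI)
    show "\<forall>i<N. a \<le> min (l i) q \<and> min (l i) q \<le> min (r i) q \<and> min (r i) q \<le> q"
      using lr \<open>a \<le> q\<close> unfolding nonoverlapping_in_def by (auto simp: min_def)
    show "\<forall>i<N. \<forall>j<N. i \<noteq> j \<longrightarrow> min (r i) q \<le> min (l j) q \<or> min (r j) q \<le> min (l i) q"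
      using lr unfolding nonoverlapping_in_def by (meson min.mono order_refl)
  qed
  have "l i \<le> r i" if "i < N" for i
    using lr that unfolding nonoverlapping_in_def by blast
  then show "(\<Sum>i<N. min (r i) q - min (l i) q) \<le> (\<Sum>i<N. r i - l i)"
    by (intro sum_mono) (force simp: min_def)
qed

lemma nonoverlapping_in_max:
  assumes lr: "nonoverlapping_in a b N l r" and "q \<le> b"
  shows "nonoverlapping_in q b N (\<lambda>i. max (l i) q) (\<lambda>i. max (r i) q)"
    and "(\<Sum>i<N. max (r i) q - max (l i) q) \<le> (\<Sum>i<N. r i - l i)"
proof -
  show "nonoverlapping_in q b N (\<lambda>i. max (l i) q) (\<lambda>i. max (r i) q)"
    unfolding nonoverlapping_in_def
  proof (intro conjI)
    show "\<forall>i<N. q \<le> max (l i) q \<and> max (l i) q \<le> max (r i) q \<and> max (r i) q \<le> b"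
      using lr \<open>q \<le> b\<close> unfolding nonoverlapping_in_def by (auto simp: max_def)
    show "\<forall>i<N. \<forall>j<N. i \<noteq> j \<longrightarrow> max (r i) q \<le> max (l j) q \<or> max (r j) q \<le> max (l i) q"
      using lr unfolding nonoverlapping_in_def by (meson max.mono order_refl)
  qed
  have "l i \<le> r i" if "i < N" for i
    using lr that unfolding nonoverlapping_in_def by blast
  then show "(\<Sum>i<N. max (r i) q - max (l i) q) \<le> (\<Sum>i<N. r i - l i)"
    by (intro sum_mono) (force simp: max_def)
qed

lemma abs_cont_on_glue:
  assumes f: "abs_cont_on a q f" and g: "abs_cont_on q b g" and fg: "f q = g q"
    and "a \<le> q" "q \<le> b"
  shows "abs_cont_on a b (\<lambda>t. if t \<le> q then f t else g t)"
proof (rule abs_cont_onI)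
  let ?h = "\<lambda>t. if t \<le> q then f t else g t"
  fix e :: real assume "e > 0"
  then have "e/2 > 0" by simp
  obtain d1 where "d1 > 0" and d1: "\<And>N l r. nonoverlapping_in a q N l r \<Longrightarrow> (\<Sum>i<N. r i - l i) < d1
      \<Longrightarrow> (\<Sum>i<N. \<bar>f (r i) - f (l i)\<bar>) < e/2"
    using abs_cont_onE[OF f \<open>e/2 > 0\<close>] by blast
  obtain d2 where "d2 > 0" and d2: "\<And>N l r. nonoverlapping_in q b N l r \<Longrightarrow> (\<Sum>i<N. r i - l i) < d2
      \<Longrightarrow> (\<Sum>i<N. \<bar>g (r i) - g (l i)\<bar>) < e/2"
    using abs_cont_onE[OF g \<open>e/2 > 0\<close>] by blast
  have "(\<Sum>i<N. \<bar>?h (r i) - ?h (l i)\<bar>) < e"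
    if lr: "nonoverlapping_in a b N l r" "(\<Sum>i<N. r i - l i) < min d1 d2" for N l r
  proof -
    have A: "(\<Sum>i<N. \<bar>f (min (r i) q) - f (min (l i) q)\<bar>) < e/2"
      using nonoverlapping_in_min[OF lr(1) \<open>a \<le> q\<close>] lr(2) by (intro d1) auto
    have B: "(\<Sum>i<N. \<bar>g (max (r i) q) - g (max (l i) q)\<bar>) < e/2"
      using nonoverlapping_in_max[OF lr(1) \<open>q \<le> b\<close>] lr(2) by (intro d2) auto
    have "l i \<le> r i" if "i < N" for i
      using lr(1) that unfolding nonoverlapping_in_def by blast
    then have "\<bar>?h (r i) - ?h (l i)\<bar>
        \<le> \<bar>f (min (r i) q) - f (min (l i) q)\<bar> + \<bar>g (max (r i) q) - g (max (l i) q)\<bar>"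
      if "i < N" for i
      using that fg by (auto simp: min_def max_def)
    then have "(\<Sum>i<N. \<bar>?h (r i) - ?h (l i)\<bar>)
        \<le> (\<Sum>i<N. \<bar>f (min (r i) q) - f (min (l i) q)\<bar>) + (\<Sum>i<N. \<bar>g (max (r i) q) - g (max (l i) q)\<bar>)"
      unfolding sum.distrib[symmetric] by (rule sum_mono) simp
    with A B show ?thesis by linarith
  qed
  with \<open>d1 > 0\<close> \<open>d2 > 0\<close> show "\<exists>d>0. \<forall>N l r. nonoverlapping_in a b N l r \<and> (\<Sum>i<N. r i - l i) < d
        \<longrightarrow> (\<Sum>i<N. \<bar>?h (r i) - ?h (l i)\<bar>) < e"
    by (intro exI[of _ "min d1 d2"]) auto
qed

lemma AE_lebesgue_reflect:
  assumes "AE t in lebesgue. P t"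
  shows "AE t in lebesgue. P (\<sigma> - t)"
proof -
  from assms obtain N where N: "N \<in> null_sets lebesgue" "{x \<in> space lebesgue. \<not> P x} \<subseteq> N"
    by (auto simp: eventually_ae_filter)
  have "negligible ((\<lambda>x. \<sigma> - x) ` N)"
    using N(1) by (intro negligible_differentiable_image_negligible)
      (auto simp: negligible_iff_null_sets intro!: derivative_intros)
  then have "(\<lambda>x. \<sigma> - x) ` N \<in> null_sets lebesgue"
    by (simp add: negligible_iff_null_sets)
  moreover have "{x \<in> space lebesgue. \<not> P (\<sigma> - x)} \<subseteq> (\<lambda>x. \<sigma> - x) ` N"
    using N(2) by (auto intro: rev_image_eqI[of "\<sigma> - _"])
  ultimately show ?thesis by (rule AE_I')
qed

lemma AE_lebesgue_neq: "AE t in lebesgue. t \<noteq> (x::real)"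
  by (rule AE_I'[of "{x}"]) (auto simp flip: negligible_iff_null_sets)

lemma has_real_derivative_reflect:
  assumes "(f has_real_derivative d) (at (\<sigma> - t) within {a..b})"
  shows "((\<lambda>x. f (\<sigma> - x)) has_real_derivative - d) (at t within {\<sigma> - b..\<sigma> - a})"
proof -
  have img: "(\<lambda>x. \<sigma> - x) ` {\<sigma> - b..\<sigma> - a} = {a..b}"
    by (auto intro: rev_image_eqI[of "\<sigma> - _"])
  have "((\<lambda>x. \<sigma> - x) has_real_derivative -1) (at t within {\<sigma> - b..\<sigma> - a})"
    by (auto intro!: derivative_eq_intros)
  from DERIV_image_chain[OF _ this, of f d] assms show ?thesis by (simp add: img o_def)
qed

lemma has_real_derivative_glue:
  fixes f g :: "real \<Rightarrow> real"
  assumes "a \<le> q" "q \<le> b" "t \<in> {a..b}"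
    and f: "t \<le> q \<Longrightarrow> (f has_real_derivative df) (at t within {a..q})"
    and g: "q \<le> t \<Longrightarrow> (g has_real_derivative dg) (at t within {q..b})"
    and "f q = g q" and "t = q \<Longrightarrow> df = dg"
  shows "((\<lambda>x. if x \<le> q then f x else g x) has_real_derivative (if t \<le> q then df else dg))
           (at t within {a..b})"
proof -
  let ?h = "\<lambda>x. if x \<le> q then f x else g x"
  have "{a..b} = {a..q} \<union> {q..b}" using assms(1,2) by auto
  moreover have "(?h has_real_derivative (if t \<le> q then df else dg)) (at t within {a..q})"
  proof (cases "t \<le> q")
    case True
    with f have "(f has_real_derivative (if t \<le> q then df else dg)) (at t within {a..q})" by simp
    then show ?thesis
      by (rule has_field_derivative_transform_within[OF _ zero_less_one]) (use assms True in auto)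
  next
    case False
    then have "at t within {a..q} = bot"
      by (simp add: trivial_limit_within islimpt_in_closure)
    then show ?thesis by (simp add: has_field_derivative_iff)
  qed
  moreover have "(?h has_real_derivative (if t \<le> q then df else dg)) (at t within {q..b})"
  proof (cases "q \<le> t")
    case True
    with g assms have "(g has_real_derivative (if t \<le> q then df else dg)) (at t within {q..b})"
      by (cases "t = q") auto
    then show ?thesis
      by (rule has_field_derivative_transform_within[OF _ zero_less_one]) (use assms True in auto)
  next
    case False
    then have "at t within {q..b} = bot"
      by (simp add: trivial_limit_within islimpt_in_closure)
    then show ?thesis by (simp add: has_field_derivative_iff)
  qed
  ultimately show ?thesis by (simp add: has_field_derivative_iff Lim_within_Un)
qed

section \<open>Solutions of the eigenvalue equation\<close>

definition ode_holds_at ::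
    "nat \<Rightarrow> (nat \<Rightarrow> real \<Rightarrow> real) \<Rightarrow> real \<Rightarrow> real \<Rightarrow> real \<Rightarrow> (nat \<Rightarrow> real \<Rightarrow> real) \<Rightarrow> real \<Rightarrow> bool" where
  "ode_holds_at m c a b lam D t \<longleftrightarrow>
     (D (m - 1) has_real_derivative D m t) (at t within {a..b}) \<and>
     D m t + (\<Sum>k<m. c k t * D k t) + lam * D 0 t = 0"

definition ode_solution ::
    "nat \<Rightarrow> (nat \<Rightarrow> real \<Rightarrow> real) \<Rightarrow> real \<Rightarrow> real \<Rightarrow> real \<Rightarrow> (nat \<Rightarrow> real \<Rightarrow> real) \<Rightarrow> bool" where
  "ode_solution m c a b lam D \<longleftrightarrow>
     (\<forall>k. Suc k < m \<longrightarrow> (\<forall>t\<in>{a..b}. (D k has_real_derivative D (Suc k) t) (at t within {a..b}))) \<and>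
     abs_cont_on a b (D (m - 1)) \<and>
     (AE t in lebesgue. t \<in> {a..b} \<longrightarrow> ode_holds_at m c a b lam D t)"

lemma AE_lebesgue_on_iff:
  "(AE t in lebesgue_on {a..b::real}. P t) \<longleftrightarrow> (AE t in lebesgue. t \<in> {a..b} \<longrightarrow> P t)"
  by (rule AE_restrict_space_iff) simp

lemma eigfun_iff:
  "eigfun m c a b BC lam u \<longleftrightarrow>
    (\<exists>D. ode_solution m c a b lam D \<and> (\<forall>t\<in>{a..b}. D 0 t = u t) \<and> BC D) \<and> (\<exists>t\<in>{a..b}. u t \<noteq> 0)"
  unfolding eigfun_def ode_solution_def ode_holds_at_def W_derivs_def AE_lebesgue_on_iff by blast

lemma spec_iff:
  "lam \<in> spec m c a b BC \<longleftrightarrow> (\<exists>D. ode_solution m c a b lam D \<and> BC D \<and> (\<exists>t\<in>{a..b}. D 0 t \<noteq> 0))"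
proof
  assume "lam \<in> spec m c a b BC"
  then obtain u D where "ode_solution m c a b lam D" "\<forall>t\<in>{a..b}. D 0 t = u t" "BC D"
      "\<exists>t\<in>{a..b}. u t \<noteq> 0"
    unfolding spec_def eigfun_iff by blast
  then show "\<exists>D. ode_solution m c a b lam D \<and> BC D \<and> (\<exists>t\<in>{a..b}. D 0 t \<noteq> 0)" by force
next
  assume "\<exists>D. ode_solution m c a b lam D \<and> BC D \<and> (\<exists>t\<in>{a..b}. D 0 t \<noteq> 0)"
  then obtain D where "ode_solution m c a b lam D" "BC D" "\<exists>t\<in>{a..b}. D 0 t \<noteq> 0" by blast
  then have "eigfun m c a b BC lam (D 0)" unfolding eigfun_iff by blast
  then show "lam \<in> spec m c a b BC" unfolding spec_def by blast
qed

lemma ode_solution_uminus: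
  assumes "ode_solution m c a b lam D"
  shows "ode_solution m c a b lam (\<lambda>k t. - D k t)"
proof -
  have "ode_holds_at m c a b lam (\<lambda>k t. - D k t) t" if "ode_holds_at m c a b lam D t" for t
    using that by (auto simp: ode_holds_at_def sum_negf intro!: DERIV_minus)
  with assms show ?thesis
    unfolding ode_solution_def by (auto intro!: DERIV_minus abs_cont_on_uminus elim!: eventually_mono)
qed

lemma ode_solution_subinterval:
  assumes "ode_solution m c a b lam D" "a \<le> a'" "b' \<le> b"
  shows "ode_solution m c a' b' lam D"
proof -
  have sub: "{a'..b'} \<subseteq> {a..b}" using assms(2,3) by auto
  then have "ode_holds_at m c a' b' lam D t" if "ode_holds_at m c a b lam D t" for t
    using that by (auto simp: ode_holds_at_def intro: DERIV_subset)
  moreover have "\<forall>k. Suc k < m \<longrightarrow>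
      (\<forall>t\<in>{a'..b'}. (D k has_real_derivative D (Suc k) t) (at t within {a'..b'}))"
    using assms(1) sub unfolding ode_solution_def by (meson DERIV_subset subsetD)
  ultimately show ?thesis
    using assms sub unfolding ode_solution_def
    by (auto intro: abs_cont_on_subinterval elim!: eventually_mono)
qed

lemma ode_solution_cong_coeffs:
  assumes "ode_solution m c a b lam D" "\<And>k t. k < m \<Longrightarrow> t \<in> {a..b} \<Longrightarrow> c k t = c' k t"
  shows "ode_solution m c' a b lam D"
proof -
  have "ode_holds_at m c' a b lam D t" if "t \<in> {a..b}" "ode_holds_at m c a b lam D t" for t
    using that by (simp add: ode_holds_at_def assms(2))
  with assms(1) show ?thesis unfolding ode_solution_def by (auto elim!: eventually_mono)
qed

definition mirror :: "real \<Rightarrow> (nat \<Rightarrow> real \<Rightarrow> real) \<Rightarrow> nat \<Rightarrow> real \<Rightarrow> real" where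
  "mirror \<sigma> D k t = (-1) ^ k * D k (\<sigma> - t)"

lemma ode_holds_at_mirror:
  assumes D: "ode_holds_at m c a b lam D (\<sigma> - t)" and "even m" "m \<ge> 1"
    and c': "\<And>k. k < m \<Longrightarrow> c' k t = (-1) ^ k * c k (\<sigma> - t)"
  shows "ode_holds_at m c' (\<sigma> - b) (\<sigma> - a) lam (mirror \<sigma> D) t"
proof -
  have sign: "(-1::real) ^ (m - 1) = -1" "(-1::real) ^ m = 1"
    using \<open>even m\<close> \<open>m \<ge> 1\<close> by (simp_all add: neg_one_odd_power)
  from D have d: "(D (m - 1) has_real_derivative D m (\<sigma> - t)) (at (\<sigma> - t) within {a..b})"
    and eq: "D m (\<sigma> - t) + (\<Sum>k<m. c k (\<sigma> - t) * D k (\<sigma> - t)) + lam * D 0 (\<sigma> - t) = 0"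
    unfolding ode_holds_at_def by auto
  from DERIV_cmult[OF has_real_derivative_reflect[OF d], of "(-1) ^ (m - 1)"]
  have "(mirror \<sigma> D (m - 1) has_real_derivative mirror \<sigma> D m t) (at t within {\<sigma> - b..\<sigma> - a})"
    using sign by (simp add: mirror_def[abs_def])
  moreover have "(\<Sum>k<m. c' k t * mirror \<sigma> D k t) = (\<Sum>k<m. c k (\<sigma> - t) * D k (\<sigma> - t))"
    by (intro sum.cong) (simp_all add: c' mirror_def flip: power_add mult_2 add: power_mult)
  ultimately show ?thesis
    using eq sign by (simp add: ode_holds_at_def mirror_def)
qed

lemma ode_solution_mirror:
  assumes D: "ode_solution m c a b lam D" and "even m" "m \<ge> 1"
    and c': "\<And>k t. k < m \<Longrightarrow> t \<in> {\<sigma> - b..\<sigma> - a} \<Longrightarrow> t \<noteq> x \<Longrightarrow> c' k t = (-1) ^ k * c k (\<sigma> - t)"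
  shows "ode_solution m c' (\<sigma> - b) (\<sigma> - a) lam (mirror \<sigma> D)"
  unfolding ode_solution_def
proof (intro conjI)
  show "\<forall>k. Suc k < m \<longrightarrow> (\<forall>t\<in>{\<sigma> - b..\<sigma> - a}.
      (mirror \<sigma> D k has_real_derivative mirror \<sigma> D (Suc k) t) (at t within {\<sigma> - b..\<sigma> - a}))"
  proof (intro allI impI ballI)
    fix k t assume "Suc k < m" "t \<in> {\<sigma> - b..\<sigma> - a}"
    with D have "(D k has_real_derivative D (Suc k) (\<sigma> - t)) (at (\<sigma> - t) within {a..b})"
      unfolding ode_solution_def by auto
    from DERIV_cmult[OF has_real_derivative_reflect[OF this], of "(-1) ^ k"]
    show "(mirror \<sigma> D k has_real_derivative mirror \<sigma> D (Suc k) t) (at t within {\<sigma> - b..\<sigma> - a})"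
      by (simp add: mirror_def[abs_def])
  qed
  have "(-1::real) ^ (m - 1) = -1"
    using \<open>even m\<close> \<open>m \<ge> 1\<close> by (simp add: neg_one_odd_power)
  with D show "abs_cont_on (\<sigma> - b) (\<sigma> - a) (mirror \<sigma> D (m - 1))"
    unfolding ode_solution_def mirror_def[abs_def] by (simp add: abs_cont_on_reflect abs_cont_on_uminus)
  have "AE t in lebesgue. t \<in> {a..b} \<longrightarrow> ode_holds_at m c a b lam D t"
    using D unfolding ode_solution_def by blast
  from AE_lebesgue_reflect[OF this, of \<sigma>] AE_lebesgue_neq[of x]
  show "AE t in lebesgue. t \<in> {\<sigma> - b..\<sigma> - a} \<longrightarrow> ode_holds_at m c' (\<sigma> - b) (\<sigma> - a) lam (mirror \<sigma> D) t"
    by eventually_elim (auto intro!: ode_holds_at_mirror \<open>even m\<close> \<open>m \<ge> 1\<close> c')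
qed

lemma ode_holds_at_glue:
  assumes "a \<le> q" "q \<le> b" "m \<ge> 1" "t \<in> {a..b}" "t \<noteq> q"
    and D: "t \<le> q \<Longrightarrow> ode_holds_at m c a q lam D t" and E: "q \<le> t \<Longrightarrow> ode_holds_at m c q b lam E t"
    and DE: "\<And>k. k < m \<Longrightarrow> D k q = E k q"
  shows "ode_holds_at m c a b lam (\<lambda>k t. if t \<le> q then D k t else E k t) t"
proof -
  have "((\<lambda>x. if x \<le> q then D (m - 1) x else E (m - 1) x) has_real_derivative
      (if t \<le> q then D m t else E m t)) (at t within {a..b})"
    using assms by (intro has_real_derivative_glue) (auto simp: ode_holds_at_def)
  with D E show ?thesis
    by (cases "t \<le> q") (auto simp: ode_holds_at_def)
qed

lemma ode_solution_glue:
  assumes D: "ode_solution m c a q lam D" and E: "ode_solution m c q b lam E"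
    and "a \<le> q" "q \<le> b" "m \<ge> 1" and DE: "\<And>k. k < m \<Longrightarrow> D k q = E k q"
  shows "ode_solution m c a b lam (\<lambda>k t. if t \<le> q then D k t else E k t)"
  unfolding ode_solution_def
proof (intro conjI)
  show "\<forall>k. Suc k < m \<longrightarrow> (\<forall>t\<in>{a..b}. ((\<lambda>x. if x \<le> q then D k x else E k x) has_real_derivative
      (if t \<le> q then D (Suc k) t else E (Suc k) t)) (at t within {a..b}))"
  proof (intro allI impI ballI)
    fix k t assume "Suc k < m" "t \<in> {a..b}"
    with D E DE show "((\<lambda>x. if x \<le> q then D k x else E k x) has_real_derivative
        (if t \<le> q then D (Suc k) t else E (Suc k) t)) (at t within {a..b})"
      unfolding ode_solution_def by (intro has_real_derivative_glue) (use \<open>a \<le> q\<close> \<open>q \<le> b\<close> in auto)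
  qed
  show "abs_cont_on a b (\<lambda>x. if x \<le> q then D (m - 1) x else E (m - 1) x)"
    using D E DE \<open>m \<ge> 1\<close> \<open>a \<le> q\<close> \<open>q \<le> b\<close> unfolding ode_solution_def by (intro abs_cont_on_glue) auto
  have "AE t in lebesgue. t \<in> {a..q} \<longrightarrow> ode_holds_at m c a q lam D t"
    "AE t in lebesgue. t \<in> {q..b} \<longrightarrow> ode_holds_at m c q b lam E t"
    using D E unfolding ode_solution_def by blast+
  with AE_lebesgue_neq[of q]
  show "AE t in lebesgue. t \<in> {a..b} \<longrightarrow>
      ode_holds_at m c a b lam (\<lambda>k t. if t \<le> q then D k t else E k t) t"
    by eventually_elim (use assms in \<open>auto intro!: ode_holds_at_glue\<close>)
qed

lemma ode_solution_derivs_eq: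
  assumes D: "ode_solution m c a b lam D" and E: "ode_solution m c' a b lam' E" and "a < b"
    and E0: "\<And>t. t \<in> {a..b} \<Longrightarrow> E 0 t = z * D 0 t"
  shows "k < m \<Longrightarrow> t \<in> {a..b} \<Longrightarrow> E k t = z * D k t"
proof (induction k arbitrary: t)
  case 0
  then show ?case by (simp add: E0)
next
  case (Suc k)
  have "(D k has_real_derivative D (Suc k) t) (at t within {a..b})"
    using D Suc.prems unfolding ode_solution_def by blast
  then have "((\<lambda>x. z * D k x) has_real_derivative z * D (Suc k) t) (at t within {a..b})"
    by (rule DERIV_cmult)
  then have "(E k has_real_derivative z * D (Suc k) t) (at t within {a..b})"
    by (rule has_field_derivative_transform_within[OF _ zero_less_one \<open>t \<in> {a..b}\<close>])
      (use Suc in auto)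
  moreover have "(E k has_real_derivative E (Suc k) t) (at t within {a..b})"
    using E Suc.prems unfolding ode_solution_def by blast
  ultimately show ?case
    using vector_derivative_unique_within_closed_interval[of a b t "E k"] \<open>a < b\<close> Suc.prems
    by (simp add: has_real_derivative_iff_has_vector_derivative cbox_interval)
qed

section \<open>Even and odd extensions\<close>

lemma odd_derivs_vanish_iff:
  "(\<forall>j<n. f (2*j+1) = 0) \<longleftrightarrow> (\<forall>k<2*n. (-1) ^ k * f k = (f k :: real))"
proof
  assume vanish: "\<forall>j<n. f (2*j+1) = 0"
  show "\<forall>k<2*n. (-1) ^ k * f k = f k"
  proof (intro allI impI)
    fix k assume "k < 2*n"
    with vanish show "(-1) ^ k * f k = f k" by (cases "even k") (auto elim!: oddE)
  qed
next
  assume h: "\<forall>k<2*n. (-1) ^ k * f k = f k"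
  show "\<forall>j<n. f (2*j+1) = 0"
  proof (intro allI impI)
    fix j assume "j < n"
    then have "(-1) ^ (2*j+1) * f (2*j+1) = f (2*j+1)" by (intro h[rule_format]) simp
    then show "f (2*j+1) = 0" by simp
  qed
qed

lemma even_derivs_vanish_iff:
  "(\<forall>j<n. f (2*j) = 0) \<longleftrightarrow> (\<forall>k<2*n. (-1) ^ k * f k = - (f k :: real))"
proof
  assume vanish: "\<forall>j<n. f (2*j) = 0"
  show "\<forall>k<2*n. (-1) ^ k * f k = - f k"
  proof (intro allI impI)
    fix k assume "k < 2*n"
    with vanish show "(-1) ^ k * f k = - f k" by (cases "even k") (auto elim!: evenE)
  qed
next
  assume h: "\<forall>k<2*n. (-1) ^ k * f k = - f k"
  show "\<forall>j<n. f (2*j) = 0"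
  proof (intro allI impI)
    fix j assume "j < n"
    then have "(-1) ^ (2*j) * f (2*j) = - f (2*j)" by (intro h[rule_format]) simp
    then show "f (2*j) = 0" by simp
  qed
qed

definition even_ext :: "real \<Rightarrow> (nat \<Rightarrow> real \<Rightarrow> real) \<Rightarrow> nat \<Rightarrow> real \<Rightarrow> real" where
  "even_ext q D k t = (if t \<le> q then D k t else mirror (2*q) D k t)"

definition odd_ext :: "real \<Rightarrow> (nat \<Rightarrow> real \<Rightarrow> real) \<Rightarrow> nat \<Rightarrow> real \<Rightarrow> real" where
  "odd_ext q D k t = (if t \<le> q then D k t else - mirror (2*q) D k t)"

lemma reflect_symmetric:
  "t \<in> {0..2*q} \<Longrightarrow> t \<noteq> q \<Longrightarrow> reflect q c k t = (-1) ^ k * reflect q c k (2*q - t)"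
  by (auto simp: reflect_def simp flip: power_add mult_2 simp add: power_mult)

lemma ode_solution_reflect_lower_half:
  assumes "ode_solution m c 0 q lam D"
  shows "ode_solution m (reflect q c) 0 q lam D"
  using assms by (rule ode_solution_cong_coeffs) (simp add: reflect_def)

lemma ode_solution_mirror_upper_half:
  assumes "ode_solution (2*n) c 0 q lam D" "n \<ge> 1"
  shows "ode_solution (2*n) (reflect q c) q (2*q) lam (mirror (2*q) D)"
proof -
  have "ode_solution (2*n) (reflect q c) (2*q - q) (2*q - 0) lam (mirror (2*q) D)"
    by (rule ode_solution_mirror[OF assms(1), where x=q]) (use assms(2) in \<open>auto simp: reflect_def\<close>)
  then show ?thesis by simp
qed

lemma ode_solution_even_ext:
  assumes D: "ode_solution (2*n) c 0 q lam D" and "n \<ge> 1" "0 \<le> q"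
    and "\<forall>j<n. D (2*j+1) q = 0"
  shows "ode_solution (2*n) (reflect q c) 0 (2*q) lam (even_ext q D)"
proof -
  have "D k q = mirror (2*q) D k q" if "k < 2*n" for k
    using assms(4) that odd_derivs_vanish_iff[of n "\<lambda>k. D k q", THEN iffD1] by (simp add: mirror_def)
  from ode_solution_glue[OF ode_solution_reflect_lower_half[OF D]
      ode_solution_mirror_upper_half[OF D \<open>n \<ge> 1\<close>] _ _ _ this] assms(2,3)
  show ?thesis unfolding even_ext_def[abs_def] by simp
qed

lemma ode_solution_odd_ext:
  assumes D: "ode_solution (2*n) c 0 q lam D" and "n \<ge> 1" "0 \<le> q"
    and "\<forall>j<n. D (2*j) q = 0"
  shows "ode_solution (2*n) (reflect q c) 0 (2*q) lam (odd_ext q D)"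
proof -
  have "D k q = - mirror (2*q) D k q" if "k < 2*n" for k
    using assms(4) that even_derivs_vanish_iff[of n "\<lambda>k. D k q", THEN iffD1] by (simp add: mirror_def)
  from ode_solution_glue[OF ode_solution_reflect_lower_half[OF D]
      ode_solution_uminus[OF ode_solution_mirror_upper_half[OF D \<open>n \<ge> 1\<close>]] _ _ _ this] assms(2,3)
  show ?thesis unfolding odd_ext_def[abs_def] by simp
qed

lemma first_eig_in_spec: "first_eig m c a b BC l \<Longrightarrow> l \<in> spec m c a b BC"
  by (simp add: first_eig_def)

lemma first_eig_le: "first_eig m c a b BC l \<Longrightarrow> lam \<in> spec m c a b BC \<Longrightarrow> l \<le> lam"
  by (simp add: first_eig_def)

lemma first_eigfunE:
  assumes "first_eig m c a b BC l"
  obtains D where "ode_solution m c a b l D" "BC D" "\<exists>t\<in>{a..b}. D 0 t \<noteq> 0"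
    "(\<forall>t\<in>{a..b}. 0 \<le> D 0 t) \<or> (\<forall>t\<in>{a..b}. D 0 t \<le> 0)"
proof -
  obtain D where D: "ode_solution m c a b l D" "BC D" "\<exists>t\<in>{a..b}. D 0 t \<noteq> 0"
    using first_eig_in_spec[OF assms] unfolding spec_iff by blast
  then have "eigfun m c a b BC l (D 0)" unfolding eigfun_iff by blast
  with assms have "(\<forall>t\<in>{a..b}. 0 \<le> D 0 t) \<or> (\<forall>t\<in>{a..b}. D 0 t \<le> 0)"
    unfolding first_eig_def by blast
  with D show ?thesis by (rule that)
qed

lemma first_eig_lt_of_sign_change:
  assumes l: "first_eig m c a b BC l" and D: "ode_solution m c a b lam D" "BC D"
    and "s \<in> {a..b}" "t \<in> {a..b}" "D 0 s * D 0 t < 0"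
  shows "l < lam"
proof -
  have "D 0 s \<noteq> 0" using assms(6) by auto
  with D \<open>s \<in> {a..b}\<close> have eig: "eigfun m c a b BC lam (D 0)" unfolding eigfun_iff by blast
  then have "l \<le> lam" using first_eig_le[OF l] unfolding spec_def by blast
  moreover have "l \<noteq> lam"
  proof
    assume "l = lam"
    with l eig have "(\<forall>t\<in>{a..b}. 0 \<le> D 0 t) \<or> (\<forall>t\<in>{a..b}. D 0 t \<le> 0)"
      unfolding first_eig_def by blast
    with assms(4-6) show False by (metis mult_nonneg_nonneg mult_nonpos_nonpos not_less)
  qed
  ultimately show ?thesis by simp
qed

lemma first_eigfuns_proportional:
  assumes "first_eig m c a b BC l" "eigfun m c a b BC l v" "eigfun m c a b BC l w"
  shows "\<exists>z. \<forall>t\<in>{a..b}. w t = z * v t"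
proof -
  obtain u where u: "\<And>v. eigfun m c a b BC l v \<Longrightarrow> \<exists>s. \<forall>t\<in>{a..b}. v t = s * u t"
    using assms(1) unfolding first_eig_def by blast
  obtain sv where sv: "\<forall>t\<in>{a..b}. v t = sv * u t" using u[OF assms(2)] by blast
  obtain sw where sw: "\<forall>t\<in>{a..b}. w t = sw * u t" using u[OF assms(3)] by blast
  have "sv \<noteq> 0" using sv assms(2) unfolding eigfun_def by auto
  with sv sw show ?thesis by (intro exI[of _ "sw / sv"]) simp
qed

text \<open>Simplicity makes the mirror image a multiple z of the eigenfunction, mirroring twice gives
  z * z = 1, and z = -1 is excluded because the eigenfunction does not change sign.\<close>
lemma first_eigfun_mirror_fixed:
  assumes l: "first_eig (2*n) c 0 L BC l" and "L > 0" "n \<ge> 1"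
    and c: "\<And>k t. k < 2*n \<Longrightarrow> t \<in> {0..L} \<Longrightarrow> t \<noteq> x \<Longrightarrow> c k t = (-1) ^ k * c k (L - t)"
    and BC: "\<And>D. BC D \<Longrightarrow> BC (mirror L D)"
  obtains D where "ode_solution (2*n) c 0 L l D" "BC D" "\<exists>t\<in>{0..L}. D 0 t \<noteq> 0"
    "\<forall>k<2*n. \<forall>t\<in>{0..L}. mirror L D k t = D k t"
proof -
  obtain D where D: "ode_solution (2*n) c 0 L l D" "BC D" and "\<exists>t\<in>{0..L}. D 0 t \<noteq> 0"
      and sign: "(\<forall>t\<in>{0..L}. 0 \<le> D 0 t) \<or> (\<forall>t\<in>{0..L}. D 0 t \<le> 0)"
    by (rule first_eigfunE[OF l])
  then obtain t0 where t0: "t0 \<in> {0..L}" "D 0 t0 \<noteq> 0" by blast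
  have "ode_solution (2*n) c (L - L) (L - 0) l (mirror L D)"
    by (rule ode_solution_mirror[OF D(1), where x=x]) (use c \<open>n \<ge> 1\<close> in auto)
  then have M: "ode_solution (2*n) c 0 L l (mirror L D)" by simp
  have "eigfun (2*n) c 0 L BC l (D 0)" using D t0 unfolding eigfun_iff by blast
  moreover have "eigfun (2*n) c 0 L BC l (mirror L D 0)"
    unfolding eigfun_iff using M BC[OF D(2)] t0
    by (intro conjI exI[of _ "mirror L D"] bexI[of _ "L - t0"]) (auto simp: mirror_def)
  ultimately obtain z where z0: "\<And>t. t \<in> {0..L} \<Longrightarrow> mirror L D 0 t = z * D 0 t"
    using first_eigfuns_proportional[OF l] by blast
  have z: "\<And>k t. k < 2*n \<Longrightarrow> t \<in> {0..L} \<Longrightarrow> mirror L D k t = z * D k t"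
    using ode_solution_derivs_eq[OF D(1) M \<open>L > 0\<close> z0] by blast
  have t0': "L - t0 \<in> {0..L}" using t0(1) by auto
  have "D 0 (L - t0) = z * D 0 t0" "D 0 t0 = z * D 0 (L - t0)"
    using z0[OF t0(1)] z0[OF t0'] by (simp_all add: mirror_def)
  then have "z * z = 1" using t0(2) by (metis mult.assoc mult_cancel_right1)
  then have "(z - 1) * (z + 1) = 0" by (simp add: algebra_simps)
  moreover have "0 \<le> z"
  proof -
    have "0 \<le> D 0 t0 * D 0 (L - t0)"
      using sign t0(1) t0' by (auto intro: mult_nonneg_nonneg mult_nonpos_nonpos)
    then have "0 \<le> z * (D 0 t0 * D 0 t0)"
      using \<open>D 0 (L - t0) = z * D 0 t0\<close> by (simp add: mult_ac)
    moreover have "0 < D 0 t0 * D 0 t0" using t0(2) not_real_square_gt_zero by blast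
    ultimately show ?thesis by (simp add: zero_le_mult_iff)
  qed
  ultimately have "z = 1" by auto
  with z D(1,2) t0 show ?thesis by (intro that) auto
qed

lemma even_ext_at_0: "0 \<le> q \<Longrightarrow> even_ext q D k 0 = D k 0"
  by (simp add: even_ext_def)

lemma even_ext_at_double: "0 < q \<Longrightarrow> even_ext q D k (2*q) = (-1) ^ k * D k 0"
  by (simp add: even_ext_def mirror_def)

lemma odd_ext_at_0: "0 \<le> q \<Longrightarrow> odd_ext q D k 0 = D k 0"
  by (simp add: odd_ext_def)

lemma odd_ext_at_double: "0 < q \<Longrightarrow> odd_ext q D k (2*q) = - ((-1) ^ k * D k 0)"
  by (simp add: odd_ext_def mirror_def)

lemma mirror_fixed_odd_derivs_vanish:
  assumes "\<And>k t. k < 2*n \<Longrightarrow> t \<in> {0..2*q} \<Longrightarrow> mirror (2*q) D k t = D k t" "0 \<le> q"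
  shows "\<forall>j<n. D (2*j+1) q = 0"
proof -
  have "\<forall>k<2*n. (-1) ^ k * D k q = D k q"
    using assms(1)[of _ q] assms(2) by (simp add: mirror_def)
  then show ?thesis by (rule odd_derivs_vanish_iff[THEN iffD2])
qed

lemma mirror_fixed_at_double:
  assumes "\<And>k t. k < 2*n \<Longrightarrow> t \<in> {0..2*q} \<Longrightarrow> mirror (2*q) D k t = D k t" "0 \<le> q" "k < 2*n"
  shows "D k (2*q) = (-1) ^ k * D k 0"
proof -
  have "(-1) ^ k * D k (2*q) = D k 0" using assms(1)[of k 0] assms(2,3) by (simp add: mirror_def)
  then have "(-1) ^ k * ((-1) ^ k * D k (2*q)) = (-1) ^ k * D k 0" by simp
  then show ?thesis by (simp flip: power_add add: power_mult_distrib[symmetric] mult.assoc[symmetric])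
qed

lemma bcN_imp_bcP_even_ext: "0 < q \<Longrightarrow> bcN n 0 q D \<Longrightarrow> bcP n 0 (2*q) (even_ext q D)"
  using odd_derivs_vanish_iff[of n "\<lambda>k. D k 0", THEN iffD1]
  by (simp add: bcN_def bcP_def even_ext_at_0 even_ext_at_double)

lemma bcD_imp_bcP_odd_ext: "0 < q \<Longrightarrow> bcD n 0 q D \<Longrightarrow> bcP n 0 (2*q) (odd_ext q D)"
  using even_derivs_vanish_iff[of n "\<lambda>k. D k 0", THEN iffD1]
  by (simp add: bcD_def bcP_def odd_ext_at_0 odd_ext_at_double)

lemma bcN_imp_bcN_even_ext: "0 < q \<Longrightarrow> bcN n 0 q D \<Longrightarrow> bcN n 0 (2*q) (even_ext q D)"
  by (simp add: bcN_def even_ext_at_0 even_ext_at_double)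

lemma bcM1_imp_bcN_odd_ext: "0 < q \<Longrightarrow> bcM1 n 0 q D \<Longrightarrow> bcN n 0 (2*q) (odd_ext q D)"
  by (simp add: bcM1_def bcN_def odd_ext_at_0 odd_ext_at_double)

lemma bcM2_imp_bcD_even_ext: "0 < q \<Longrightarrow> bcM2 n 0 q D \<Longrightarrow> bcD n 0 (2*q) (even_ext q D)"
  by (simp add: bcM2_def bcD_def even_ext_at_0 even_ext_at_double)

lemma bcD_imp_bcD_odd_ext: "0 < q \<Longrightarrow> bcD n 0 q D \<Longrightarrow> bcD n 0 (2*q) (odd_ext q D)"
  by (simp add: bcD_def odd_ext_at_0 odd_ext_at_double)

lemma bcM1_imp_bcA_odd_ext: "0 < q \<Longrightarrow> bcM1 n 0 q D \<Longrightarrow> bcA n 0 (2*q) (odd_ext q D)"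
  using odd_derivs_vanish_iff[of n "\<lambda>k. D k 0", THEN iffD1]
  by (simp add: bcM1_def bcA_def odd_ext_at_0 odd_ext_at_double)

lemma bcM2_imp_bcA_even_ext: "0 < q \<Longrightarrow> bcM2 n 0 q D \<Longrightarrow> bcA n 0 (2*q) (even_ext q D)"
  using even_derivs_vanish_iff[of n "\<lambda>k. D k 0", THEN iffD1]
  by (simp add: bcM2_def bcA_def even_ext_at_0 even_ext_at_double)

lemma bcP_mirror: "bcP n 0 L D \<Longrightarrow> bcP n 0 L (mirror L D)"
  by (simp add: bcP_def mirror_def)

lemma bcN_mirror: "bcN n 0 L D \<Longrightarrow> bcN n 0 L (mirror L D)"
  by (simp add: bcN_def mirror_def)

lemma bcD_mirror: "bcD n 0 L D \<Longrightarrow> bcD n 0 L (mirror L D)"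
  by (simp add: bcD_def mirror_def)

lemma bcA_mirror: "bcA n 0 L D \<Longrightarrow> bcA n 0 L (mirror L D)"
  by (simp add: bcA_def mirror_def)

lemma bcP_mirror_fixed_imp_bcN:
  assumes "0 \<le> q" "bcP n 0 (2*q) D"
    and fixed: "\<And>k t. k < 2*n \<Longrightarrow> t \<in> {0..2*q} \<Longrightarrow> mirror (2*q) D k t = D k t"
  shows "bcN n 0 q D"
proof -
  have "\<forall>k<2*n. (-1) ^ k * D k 0 = D k 0"
    using assms(2) mirror_fixed_at_double[of n q D, OF fixed assms(1)] by (simp add: bcP_def)
  then have "\<forall>j<n. D (2*j+1) 0 = 0" by (rule odd_derivs_vanish_iff[THEN iffD2])
  with mirror_fixed_odd_derivs_vanish[of n q D, OF fixed assms(1)] show ?thesis by (simp add: bcN_def)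
qed

lemma bcN_mirror_fixed_imp_bcN:
  assumes "0 \<le> q" "bcN n 0 (2*q) D"
    and fixed: "\<And>k t. k < 2*n \<Longrightarrow> t \<in> {0..2*q} \<Longrightarrow> mirror (2*q) D k t = D k t"
  shows "bcN n 0 q D"
  using assms(2) mirror_fixed_odd_derivs_vanish[of n q D, OF fixed assms(1)] by (simp add: bcN_def)

lemma bcD_mirror_fixed_imp_bcM2:
  assumes "0 \<le> q" "bcD n 0 (2*q) D"
    and fixed: "\<And>k t. k < 2*n \<Longrightarrow> t \<in> {0..2*q} \<Longrightarrow> mirror (2*q) D k t = D k t"
  shows "bcM2 n 0 q D"
  using assms(2) mirror_fixed_odd_derivs_vanish[of n q D, OF fixed assms(1)] by (simp add: bcD_def bcM2_def)

lemma bcA_mirror_fixed_imp_bcM2: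
  assumes "0 \<le> q" "bcA n 0 (2*q) D"
    and fixed: "\<And>k t. k < 2*n \<Longrightarrow> t \<in> {0..2*q} \<Longrightarrow> mirror (2*q) D k t = D k t"
  shows "bcM2 n 0 q D"
proof -
  have "\<forall>k<2*n. (-1) ^ k * D k 0 = - D k 0"
    using assms(2) mirror_fixed_at_double[of n q D, OF fixed assms(1)] by (simp add: bcA_def)
  then have "\<forall>j<n. D (2*j) 0 = 0" by (rule even_derivs_vanish_iff[THEN iffD2])
  with mirror_fixed_odd_derivs_vanish[of n q D, OF fixed assms(1)] show ?thesis by (simp add: bcM2_def)
qed

section \<open>Comparison of first eigenvalues\<close>

lemma spec_even_ext:
  assumes "n \<ge> 1" "0 \<le> q" "lam \<in> spec (2*n) c 0 q BC"
    and "\<And>D. BC D \<Longrightarrow> \<forall>j<n. D (2*j+1) q = 0" and "\<And>D. BC D \<Longrightarrow> BC' (even_ext q D)"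
  shows "lam \<in> spec (2*n) (reflect q c) 0 (2*q) BC'"
proof -
  obtain D t where D: "ode_solution (2*n) c 0 q lam D" "BC D" "t \<in> {0..q}" "D 0 t \<noteq> 0"
    using assms(3) unfolding spec_iff by blast
  have "ode_solution (2*n) (reflect q c) 0 (2*q) lam (even_ext q D)"
    using ode_solution_even_ext[OF D(1) assms(1,2) assms(4)[OF D(2)]] .
  with D assms(5) show ?thesis
    unfolding spec_iff by (intro exI[of _ "even_ext q D"] conjI bexI[of _ t]) (auto simp: even_ext_def)
qed

lemma spec_odd_ext:
  assumes "n \<ge> 1" "0 \<le> q" "lam \<in> spec (2*n) c 0 q BC"
    and "\<And>D. BC D \<Longrightarrow> \<forall>j<n. D (2*j) q = 0" and "\<And>D. BC D \<Longrightarrow> BC' (odd_ext q D)"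
  shows "lam \<in> spec (2*n) (reflect q c) 0 (2*q) BC'"
proof -
  obtain D t where D: "ode_solution (2*n) c 0 q lam D" "BC D" "t \<in> {0..q}" "D 0 t \<noteq> 0"
    using assms(3) unfolding spec_iff by blast
  have "ode_solution (2*n) (reflect q c) 0 (2*q) lam (odd_ext q D)"
    using ode_solution_odd_ext[OF D(1) assms(1,2) assms(4)[OF D(2)]] .
  with D assms(5) show ?thesis
    unfolding spec_iff by (intro exI[of _ "odd_ext q D"] conjI bexI[of _ t]) (auto simp: odd_ext_def)
qed

text \<open>The odd extension of a nontrivial solution changes sign, so it cannot be a first eigenfunction.\<close>
lemma first_eig_lt_odd_ext:
  assumes "n \<ge> 1" "0 \<le> q" "first_eig (2*n) (reflect q c) 0 (2*q) BC' l" "lam \<in> spec (2*n) c 0 q BC"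
    and "\<And>D. BC D \<Longrightarrow> \<forall>j<n. D (2*j) q = 0" and "\<And>D. BC D \<Longrightarrow> BC' (odd_ext q D)"
  shows "l < lam"
proof -
  obtain D t where D: "ode_solution (2*n) c 0 q lam D" "BC D" "t \<in> {0..q}" "D 0 t \<noteq> 0"
    using assms(4) unfolding spec_iff by blast
  have "D 0 q = 0" using assms(5)[OF D(2)] \<open>n \<ge> 1\<close> by auto
  with D(3,4) have "t < q" by (cases "t = q") auto
  then have "odd_ext q D 0 t * odd_ext q D 0 (2*q - t) = - (D 0 t * D 0 t)"
    by (simp add: odd_ext_def mirror_def)
  also have "\<dots> < 0" using D(4) not_real_square_gt_zero by fastforce
  finally have "odd_ext q D 0 t * odd_ext q D 0 (2*q - t) < 0" .
  then show ?thesis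
    using D(3) ode_solution_odd_ext[OF D(1) assms(1,2) assms(5)[OF D(2)]] assms(6)[OF D(2)]
    by (intro first_eig_lt_of_sign_change[OF assms(3), where s=t and t="2*q - t"]) auto
qed

lemma first_eig_reflect_in_spec:
  assumes "n \<ge> 1" "0 < q" "first_eig (2*n) (reflect q c) 0 (2*q) BC' l"
    and "\<And>D. BC' D \<Longrightarrow> BC' (mirror (2*q) D)"
    and "\<And>D. BC' D \<Longrightarrow> (\<And>k t. k < 2*n \<Longrightarrow> t \<in> {0..2*q} \<Longrightarrow> mirror (2*q) D k t = D k t) \<Longrightarrow> BC D"
  shows "l \<in> spec (2*n) c 0 q BC"
proof -
  have "0 < 2*q" using \<open>0 < q\<close> by simp
  moreover have "reflect q c k t = (-1) ^ k * reflect q c k (2*q - t)"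
    if "t \<in> {0..2*q}" "t \<noteq> q" for k t
    using that by (rule reflect_symmetric)
  ultimately obtain D where D: "ode_solution (2*n) (reflect q c) 0 (2*q) l D" "BC' D"
      "\<exists>t\<in>{0..2*q}. D 0 t \<noteq> 0" "\<forall>k<2*n. \<forall>t\<in>{0..2*q}. mirror (2*q) D k t = D k t"
    using first_eigfun_mirror_fixed[OF assms(3) _ assms(1) _ assms(4)] by blast
  then have fixed: "\<And>k t. k < 2*n \<Longrightarrow> t \<in> {0..2*q} \<Longrightarrow> mirror (2*q) D k t = D k t" by blast
  have "ode_solution (2*n) (reflect q c) 0 q l D"
    by (rule ode_solution_subinterval[OF D(1)]) (use \<open>0 < q\<close> in auto)
  then have "ode_solution (2*n) c 0 q l D"
    by (rule ode_solution_cong_coeffs) (simp add: reflect_def)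
  moreover obtain t where t: "t \<in> {0..2*q}" "D 0 t \<noteq> 0" using D(3) by blast
  have "\<exists>t\<in>{0..q}. D 0 t \<noteq> 0"
  proof (cases "t \<le> q")
    case True
    with t show ?thesis by auto
  next
    case False
    then have "2*q - t \<in> {0..q}" using t(1) by auto
    moreover have "D 0 (2*q - t) = D 0 t" using fixed[of 0 t] t(1) \<open>n \<ge> 1\<close> by (simp add: mirror_def)
    ultimately show ?thesis using t(2) by (intro bexI[of _ "2*q - t"]) auto
  qed
  ultimately show ?thesis using assms(5)[OF D(2) fixed] unfolding spec_iff by blast
qed

lemma first_eig_bcN_eq_bcP_double:
  assumes "n \<ge> 1" "0 < q" and N: "first_eig (2*n) c 0 q (bcN n 0 q) lN"
    and P: "first_eig (2*n) (reflect q c) 0 (2*q) (bcP n 0 (2*q)) lP"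
  shows "lN = lP"
proof (rule antisym)
  have "0 \<le> q" using \<open>0 < q\<close> by simp
  show "lN \<le> lP"
    using first_eig_reflect_in_spec[OF assms(1,2) P bcP_mirror bcP_mirror_fixed_imp_bcN[OF \<open>0 \<le> q\<close>]]
    by (rule first_eig_le[OF N])
  show "lP \<le> lN"
    using spec_even_ext[where BC'="bcP n 0 (2*q)", OF assms(1) \<open>0 \<le> q\<close> first_eig_in_spec[OF N] _ bcN_imp_bcP_even_ext[OF \<open>0 < q\<close>]]
    by (rule first_eig_le[OF P]) (simp add: bcN_def)
qed

lemma first_eig_bcP_double_lt_bcD:
  assumes "n \<ge> 1" "0 < q" and D: "first_eig (2*n) c 0 q (bcD n 0 q) lD"
    and P: "first_eig (2*n) (reflect q c) 0 (2*q) (bcP n 0 (2*q)) lP"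
  shows "lP < lD"
  using assms(2) by (intro first_eig_lt_odd_ext[where BC'="bcP n 0 (2*q)", OF assms(1) _ P
      first_eig_in_spec[OF D] _ bcD_imp_bcP_odd_ext[OF \<open>0 < q\<close>]]) (auto simp: bcD_def)

lemma first_eig_bcN_eq_bcN_double:
  assumes "n \<ge> 1" "0 < q" and N: "first_eig (2*n) c 0 q (bcN n 0 q) lN"
    and N2: "first_eig (2*n) (reflect q c) 0 (2*q) (bcN n 0 (2*q)) lN2"
  shows "lN = lN2"
proof (rule antisym)
  have "0 \<le> q" using \<open>0 < q\<close> by simp
  show "lN \<le> lN2"
    using first_eig_reflect_in_spec[OF assms(1,2) N2 bcN_mirror bcN_mirror_fixed_imp_bcN[OF \<open>0 \<le> q\<close>]]
    by (rule first_eig_le[OF N])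
  show "lN2 \<le> lN"
    using spec_even_ext[where BC'="bcN n 0 (2*q)", OF assms(1) \<open>0 \<le> q\<close> first_eig_in_spec[OF N] _
        bcN_imp_bcN_even_ext[OF \<open>0 < q\<close>]]
    by (rule first_eig_le[OF N2]) (simp add: bcN_def)
qed

lemma first_eig_bcN_double_lt_bcM1:
  assumes "n \<ge> 1" "0 < q" and M1: "first_eig (2*n) c 0 q (bcM1 n 0 q) lM1"
    and N2: "first_eig (2*n) (reflect q c) 0 (2*q) (bcN n 0 (2*q)) lN2"
  shows "lN2 < lM1"
  using assms(2) by (intro first_eig_lt_odd_ext[where BC'="bcN n 0 (2*q)", OF assms(1) _ N2
      first_eig_in_spec[OF M1] _ bcM1_imp_bcN_odd_ext[OF \<open>0 < q\<close>]]) (auto simp: bcM1_def)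

lemma first_eig_bcM2_eq_bcD_double:
  assumes "n \<ge> 1" "0 < q" and M2: "first_eig (2*n) c 0 q (bcM2 n 0 q) lM2"
    and D2: "first_eig (2*n) (reflect q c) 0 (2*q) (bcD n 0 (2*q)) lD2"
  shows "lM2 = lD2"
proof (rule antisym)
  have "0 \<le> q" using \<open>0 < q\<close> by simp
  show "lM2 \<le> lD2"
    using first_eig_reflect_in_spec[OF assms(1,2) D2 bcD_mirror bcD_mirror_fixed_imp_bcM2[OF \<open>0 \<le> q\<close>]]
    by (rule first_eig_le[OF M2])
  show "lD2 \<le> lM2"
    using spec_even_ext[where BC'="bcD n 0 (2*q)", OF assms(1) \<open>0 \<le> q\<close> first_eig_in_spec[OF M2] _
        bcM2_imp_bcD_even_ext[OF \<open>0 < q\<close>]]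
    by (rule first_eig_le[OF D2]) (simp add: bcM2_def)
qed

lemma first_eig_bcD_double_lt_bcD:
  assumes "n \<ge> 1" "0 < q" and D: "first_eig (2*n) c 0 q (bcD n 0 q) lD"
    and D2: "first_eig (2*n) (reflect q c) 0 (2*q) (bcD n 0 (2*q)) lD2"
  shows "lD2 < lD"
  using assms(2) by (intro first_eig_lt_odd_ext[where BC'="bcD n 0 (2*q)", OF assms(1) _ D2
      first_eig_in_spec[OF D] _ bcD_imp_bcD_odd_ext[OF \<open>0 < q\<close>]]) (auto simp: bcD_def)

lemma first_eig_bcA_double_eq_min:
  assumes "n \<ge> 1" "0 < q" and M1: "first_eig (2*n) c 0 q (bcM1 n 0 q) lM1"
    and M2: "first_eig (2*n) c 0 q (bcM2 n 0 q) lM2"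
    and A: "first_eig (2*n) (reflect q c) 0 (2*q) (bcA n 0 (2*q)) lA"
  shows "lA = min lM1 lM2"
proof -
  have "0 \<le> q" using \<open>0 < q\<close> by simp
  have "lA \<le> lM1"
    using spec_odd_ext[where BC'="bcA n 0 (2*q)", OF assms(1) \<open>0 \<le> q\<close> first_eig_in_spec[OF M1] _
        bcM1_imp_bcA_odd_ext[OF \<open>0 < q\<close>]]
    by (rule first_eig_le[OF A]) (simp add: bcM1_def)
  moreover have "lA \<le> lM2"
    using spec_even_ext[where BC'="bcA n 0 (2*q)", OF assms(1) \<open>0 \<le> q\<close> first_eig_in_spec[OF M2] _
        bcM2_imp_bcA_even_ext[OF \<open>0 < q\<close>]]
    by (rule first_eig_le[OF A]) (simp add: bcM2_def)
  moreover have "lM2 \<le> lA"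
    using first_eig_reflect_in_spec[OF assms(1,2) A bcA_mirror bcA_mirror_fixed_imp_bcM2[OF \<open>0 \<le> q\<close>]]
    by (rule first_eig_le[OF M2])
  ultimately show ?thesis by linarith
qed

theorem theorem4p2:
  fixes n :: nat and T :: real and a :: "nat \<Rightarrow> real \<Rightarrow> real"
    and lN lD lM1 lM2 lP2 lA2 lN2 lD2 lP4 :: real
  assumes n: "n \<ge> 1" and T: "T > 0"
    and a_int: "\<forall>k<2*n. a k absolutely_integrable_on {0..T}"
    and hN: "first_eig (2*n) a 0 T (bcN n 0 T) lN"
    and hD: "first_eig (2*n) a 0 T (bcD n 0 T) lD"
    and hM1: "first_eig (2*n) a 0 T (bcM1 n 0 T) lM1"
    and hM2: "first_eig (2*n) a 0 T (bcM2 n 0 T) lM2"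
    and hP2: "first_eig (2*n) (reflect T a) 0 (2*T) (bcP n 0 (2*T)) lP2"
    and hA2: "first_eig (2*n) (reflect T a) 0 (2*T) (bcA n 0 (2*T)) lA2"
    and hN2: "first_eig (2*n) (reflect T a) 0 (2*T) (bcN n 0 (2*T)) lN2"
    and hD2: "first_eig (2*n) (reflect T a) 0 (2*T) (bcD n 0 (2*T)) lD2"
    and hP4: "first_eig (2*n) (reflect (2*T) (reflect T a)) 0 (4*T) (bcP n 0 (4*T)) lP4"
  shows "(lN = lP2 \<and> lP2 < lD) \<and>
         (lN = lN2 \<and> lN2 < lM1) \<and>
         lN = lP4 \<and>
         (lM2 = lD2 \<and> lD2 < lD) \<and>
         lN < lM2 \<and>
         lA2 = min lM1 lM2"
proof -
  have "0 < 2*T" using T by simp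
  from hP4 have hP4': "first_eig (2*n) (reflect (2*T) (reflect T a)) 0 (2*(2*T)) (bcP n 0 (2*(2*T))) lP4"
    by simp
  have "lN = lP2" "lP2 < lD"
    using first_eig_bcN_eq_bcP_double[OF n T hN hP2] first_eig_bcP_double_lt_bcD[OF n T hD hP2] .
  moreover have "lN = lN2" "lN2 < lM1"
    using first_eig_bcN_eq_bcN_double[OF n T hN hN2] first_eig_bcN_double_lt_bcM1[OF n T hM1 hN2] .
  moreover have "lN2 = lP4" "lP4 < lD2"
    using first_eig_bcN_eq_bcP_double[OF n \<open>0 < 2*T\<close> hN2 hP4']
      first_eig_bcP_double_lt_bcD[OF n \<open>0 < 2*T\<close> hD2 hP4'] .
  moreover have "lM2 = lD2" "lD2 < lD"
    using first_eig_bcM2_eq_bcD_double[OF n T hM2 hD2] first_eig_bcD_double_lt_bcD[OF n T hD hD2] .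
  moreover have "lA2 = min lM1 lM2"
    using first_eig_bcA_double_eq_min[OF n T hM1 hM2 hA2] .
  ultimately show ?thesis by linarith
qed

end
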